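(* Let $\Gamma$ be a Gromov hyperbolic graph and $c$ a vertex of $\Gamma$. Suppose: (1) every point of the Gromov boundary of $\Gamma$ is represented by a geodesic ray starting at $c$; (2) every vertex $v$ of $\Gamma$ is adjacent to a vertex $u$ with $d(u,c)=d(v,c)+1$. Suppose moreover there is $D>0$ such that for all $r\ge0$: (3) for every $z\in S_r(c)$ and every $x,y\in S_{r+1}(c)\cap B_1(z)$ there is a path $x=x_0,\dots,x_\ell=y$ with $x_i\in(\Gamma\setminus B_r(c))\cap B_D(x)$ for $0\le i\le\ell$; (4) for every adjacent pair $x,y\in S_r(c)$ there is a path $x=x_0,\dots,x_\ell=y$ with $x_i\in(\Gamma\setminus B_r(c))\cap B_D(x)$ for $0<i<\ell$. Then the Gromov boundary of $\Gamma$, with a visual metric, is linearly connected.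
   Context: $d$ is the graph metric; $S_r(c)$ is the set of vertices at distance exactly $r$ from $c$ and $B_\rho(z)$ is the set of vertices at distance at most $\rho$ from $z$. A path is a sequence of vertices each adjacent to the next. A metric space $(X,d)$ is linearly connected if there is $L>0$ such that any $x,y\in X$ lie in a compact connected subset of diameter at most $L\,d(x,y)$. *)

theory Defs
  imports "HOL-Analysis.Analysis"
begin

text \<open>A (simple, undirected) graph on vertex type 'v is an adjacency relation E,
  symmetric and irreflexive. All elements of 'v are vertices.\<close>

definition simple_graph :: "('v \<Rightarrow> 'v \<Rightarrow> bool) \<Rightarrow> bool" where
  "simple_graph E \<longleftrightarrow> (\<forall>x y. E x y \<longrightarrow> E y x) \<and> (\<forall>x. \<not> E x x)"

definition is_path :: "('v \<Rightarrow> 'v \<Rightarrow> bool) \<Rightarrow> 'v list \<Rightarrow> bool" where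
  "is_path E xs \<longleftrightarrow> xs \<noteq> [] \<and> (\<forall>i. Suc i < length xs \<longrightarrow> E (xs ! i) (xs ! Suc i))"

definition connected_graph :: "('v \<Rightarrow> 'v \<Rightarrow> bool) \<Rightarrow> bool" where
  "connected_graph E \<longleftrightarrow> (\<forall>x y. \<exists>xs. is_path E xs \<and> hd xs = x \<and> last xs = y)"

definition gdist :: "('v \<Rightarrow> 'v \<Rightarrow> bool) \<Rightarrow> 'v \<Rightarrow> 'v \<Rightarrow> nat" where
  "gdist E x y = (LEAST n. \<exists>xs. is_path E xs \<and> hd xs = x \<and> last xs = y \<and> length xs = Suc n)"

definition gprod :: "('v \<Rightarrow> 'v \<Rightarrow> bool) \<Rightarrow> 'v \<Rightarrow> 'v \<Rightarrow> 'v \<Rightarrow> real" where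
  "gprod E w x y = (real (gdist E x w) + real (gdist E y w) - real (gdist E x y)) / 2"

definition gromov_hyperbolic_graph :: "('v \<Rightarrow> 'v \<Rightarrow> bool) \<Rightarrow> bool" where
  "gromov_hyperbolic_graph E \<longleftrightarrow> simple_graph E \<and> connected_graph E \<and>
     (\<exists>\<delta>\<ge>0. \<forall>w x y z. gprod E w x y \<ge> min (gprod E w x z) (gprod E w y z) - \<delta>)"

definition conv_inf :: "('v \<Rightarrow> 'v \<Rightarrow> bool) \<Rightarrow> 'v \<Rightarrow> (nat \<Rightarrow> 'v) \<Rightarrow> bool" where
  "conv_inf E w s \<longleftrightarrow> (\<forall>M. \<exists>N. \<forall>i\<ge>N. \<forall>j\<ge>N. gprod E w (s i) (s j) \<ge> M)"

definition seq_equiv :: "('v \<Rightarrow> 'v \<Rightarrow> bool) \<Rightarrow> 'v \<Rightarrow> (nat \<Rightarrow> 'v) \<Rightarrow> (nat \<Rightarrow> 'v) \<Rightarrow> bool" where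
  "seq_equiv E w s t \<longleftrightarrow> (\<forall>M. \<exists>N. \<forall>i\<ge>N. \<forall>j\<ge>N. gprod E w (s i) (t j) \<ge> M)"

text \<open>Boundary points: equivalence classes of sequences converging at infinity
  (w.r.t. basepoint w; the result does not depend on w).\<close>
definition gromov_boundary :: "('v \<Rightarrow> 'v \<Rightarrow> bool) \<Rightarrow> 'v \<Rightarrow> (nat \<Rightarrow> 'v) set set" where
  "gromov_boundary E w = {{t. conv_inf E w t \<and> seq_equiv E w s t} | s. conv_inf E w s}"

definition dliminf :: "('v \<Rightarrow> 'v \<Rightarrow> bool) \<Rightarrow> 'v \<Rightarrow> (nat \<Rightarrow> 'v) \<Rightarrow> (nat \<Rightarrow> 'v) \<Rightarrow> ereal" where
  "dliminf E w s t = (SUP n. INF i\<in>{n..}. INF j\<in>{n..}. ereal (gprod E w (s i) (t j)))"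

definition bprod :: "('v \<Rightarrow> 'v \<Rightarrow> bool) \<Rightarrow> 'v \<Rightarrow> (nat \<Rightarrow> 'v) set \<Rightarrow> (nat \<Rightarrow> 'v) set \<Rightarrow> ereal" where
  "bprod E w \<xi> \<eta> = (SUP (s, t) \<in> \<xi> \<times> \<eta>. dliminf E w s t)"

definition eexp_neg :: "real \<Rightarrow> ereal \<Rightarrow> real" where
  "eexp_neg \<epsilon> g = (if g = \<infinity> then 0 else exp (- \<epsilon> * real_of_ereal g))"

definition visual_metric ::
  "('v \<Rightarrow> 'v \<Rightarrow> bool) \<Rightarrow> 'v \<Rightarrow> 'v \<Rightarrow> real \<Rightarrow> ((nat \<Rightarrow> 'v) set \<Rightarrow> (nat \<Rightarrow> 'v) set \<Rightarrow> real) \<Rightarrow> bool" where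
  "visual_metric E c w \<epsilon> \<rho> \<longleftrightarrow> \<epsilon> > 0 \<and> Metric_space (gromov_boundary E c) \<rho> \<and>
     (\<exists>k1>0. \<exists>k2>0. \<forall>\<xi>\<in>gromov_boundary E c. \<forall>\<eta>\<in>gromov_boundary E c.
        k1 * eexp_neg \<epsilon> (bprod E w \<xi> \<eta>) \<le> \<rho> \<xi> \<eta> \<and> \<rho> \<xi> \<eta> \<le> k2 * eexp_neg \<epsilon> (bprod E w \<xi> \<eta>))"

definition linearly_connected :: "'a set \<Rightarrow> ('a \<Rightarrow> 'a \<Rightarrow> real) \<Rightarrow> bool" where
  "linearly_connected X d \<longleftrightarrow> (\<exists>L>0. \<forall>x\<in>X. \<forall>y\<in>X. \<exists>K\<subseteq>X. x \<in> K \<and> y \<in> K \<and>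
      compactin (Metric_space.mtopology X d) K \<and> connectedin (Metric_space.mtopology X d) K \<and>
      (\<forall>a\<in>K. \<forall>b\<in>K. d a b \<le> L * d x y))"

definition geodesic_ray :: "('v \<Rightarrow> 'v \<Rightarrow> bool) \<Rightarrow> (nat \<Rightarrow> 'v) \<Rightarrow> bool" where
  "geodesic_ray E \<gamma> \<longleftrightarrow> (\<forall>i j. gdist E (\<gamma> i) (\<gamma> j) = (if i \<le> j then j - i else i - j))"

end

theory Submission
  imports Defs "HOL-Library.Diagonal_Subsequence"
begin

text \<open>
  Let \<open>\<xi> \<noteq> \<eta>\<close> be boundary points, represented by geodesic rays \<open>\<gamma>, \<gamma>'\<close> from \<open>c\<close>, and let
  \<open>p\<close> be the last time at which the rays are roughly \<open>4\<delta>\<close>-close; the visual distance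
  \<open>\<rho> \<xi> \<eta>\<close> is then bounded below by a constant times \<open>exp (-\<epsilon> p)\<close>. Near level \<open>p\<close> the rays
  are joined by a short lazy path. Conditions (2)--(4) allow any lazy path above level \<open>n\<close>
  to be refined to one above level \<open>n + 1\<close> whose vertices stay within bounded distance of
  the old ones. Iterating gives nested chains, and the sequences choosing one vertex per chain
  (branches) escape to infinity linearly with bounded steps, hence converge. Their limits form a compact
  (by a diagonal argument over the finite chains) and connected (consecutive chain vertices give
  arbitrarily fine chains of boundary points) set containing \<open>\<xi>\<close> and \<open>\<eta>\<close>, of diameter at
  most a constant times \<open>exp (-\<epsilon> p)\<close>.
\<close>

lemma is_path_iff_successively: "is_path E xs \<longleftrightarrow> xs \<noteq> [] \<and> successively E xs"
  by (simp add: is_path_def successively_conv_nth)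

section \<open>Graph metric, lazy paths and geodesic rays\<close>

locale graph_metric =
  fixes E :: "'v \<Rightarrow> 'v \<Rightarrow> bool"
  assumes simple: "simple_graph E" and connected: "connected_graph E"
begin

lemma gdist_path_ex:
  obtains xs where "is_path E xs" "hd xs = x" "last xs = y" "length xs = Suc (gdist E x y)"
proof -
  obtain xs where "is_path E xs" "hd xs = x" "last xs = y"
    using connected unfolding connected_graph_def by blast
  then have "\<exists>n xs. is_path E xs \<and> hd xs = x \<and> last xs = y \<and> length xs = Suc n"
    by (metis is_path_def length_0_conv not0_implies_Suc)
  then have "\<exists>xs. is_path E xs \<and> hd xs = x \<and> last xs = y \<and> length xs = Suc (gdist E x y)"
    unfolding gdist_def by (rule LeastI_ex)
  then show thesis using that by blast
qed

lemma gdist_le_path_length: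
  assumes "is_path E xs" "hd xs = x" "last xs = y"
  shows "Suc (gdist E x y) \<le> length xs"
proof -
  have "length xs = Suc (length xs - 1)"
    using assms(1) unfolding is_path_def by (cases xs) auto
  moreover have "gdist E x y \<le> length xs - 1"
    unfolding gdist_def by (rule Least_le) (use assms calculation in blast)
  ultimately show ?thesis by linarith
qed

lemma gdist_self [simp]: "gdist E x x = 0"
  using gdist_le_path_length[of "[x]" x x] by (simp add: is_path_def)

lemma gdist_eq_0_iff [simp]: "gdist E x y = 0 \<longleftrightarrow> x = y"
proof
  assume "gdist E x y = 0"
  moreover obtain xs where "is_path E xs" "hd xs = x" "last xs = y" "length xs = Suc (gdist E x y)"
    by (rule gdist_path_ex)
  ultimately show "x = y" by (auto simp: length_Suc_conv)
qed simp

lemma gdist_commute: "gdist E x y = gdist E y x"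
proof -
  have "gdist E y x \<le> gdist E x y" for x y
  proof -
    obtain xs where "is_path E xs" "hd xs = x" "last xs = y" "length xs = Suc (gdist E x y)"
      by (rule gdist_path_ex)
    moreover have "is_path E (rev xs)"
      using \<open>is_path E xs\<close> simple
      by (auto simp: is_path_iff_successively simple_graph_def elim: successively_mono)
    ultimately show ?thesis
      using gdist_le_path_length[of "rev xs" y x] by (simp add: hd_rev last_rev)
  qed
  then show ?thesis by (meson le_antisym)
qed

lemma gdist_triangle: "gdist E x z \<le> gdist E x y + gdist E y z"
proof -
  obtain xs where xs: "is_path E xs" "hd xs = x" "last xs = y" "length xs = Suc (gdist E x y)"
    by (rule gdist_path_ex)
  obtain ys where ys: "is_path E ys" "hd ys = y" "last ys = z" "length ys = Suc (gdist E y z)"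
    by (rule gdist_path_ex)
  have ys_split: "ys = y # tl ys"
    using ys by (cases ys) (auto simp: is_path_def)
  have "successively E ys" using ys(1) by (simp add: is_path_iff_successively)
  then have "successively E (tl ys)" "tl ys \<noteq> [] \<Longrightarrow> E y (hd (tl ys))"
    using ys_split successively_Cons[of E y "tl ys"] by auto
  then have "is_path E (xs @ tl ys)"
    using xs(1,3) by (auto simp: is_path_iff_successively successively_append_iff)
  moreover have "last (xs @ tl ys) = z"
    using xs ys ys_split by (metis append_Nil2 last_ConsL last_appendR last_tl)
  ultimately show ?thesis
    using gdist_le_path_length[of "xs @ tl ys" x z] xs ys by (simp add: is_path_def)
qed

lemma gdist_edge:
  assumes "E x y" shows "gdist E x y = 1"
proof -
  have "is_path E [x, y]" using assms by (simp add: is_path_iff_successively)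
  then have "gdist E x y \<le> 1" using gdist_le_path_length[of "[x, y]" x y] by simp
  moreover have "x \<noteq> y" using assms simple by (auto simp: simple_graph_def)
  ultimately show ?thesis by (simp add: le_Suc_eq)
qed

lemma gdist_le_1_iff: "gdist E x y \<le> 1 \<longleftrightarrow> x = y \<or> E x y"
proof
  assume "gdist E x y \<le> 1"
  moreover obtain xs where "is_path E xs" "hd xs = x" "last xs = y" "length xs = Suc (gdist E x y)"
    by (rule gdist_path_ex)
  ultimately show "x = y \<or> E x y"
    by (cases xs) (auto simp: is_path_iff_successively le_Suc_eq length_Suc_conv)
qed (auto simp: gdist_edge)

end

text \<open>Lazy paths may repeat a vertex (consecutive vertices are equal or adjacent), so refined
  chains can be glued by plain concatenation.\<close>

definition lazy_path :: "('v \<Rightarrow> 'v \<Rightarrow> bool) \<Rightarrow> 'v list \<Rightarrow> bool" where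
  "lazy_path E xs \<longleftrightarrow> xs \<noteq> [] \<and> successively (\<lambda>x y. gdist E x y \<le> 1) xs"

lemma lazy_path_nth: "lazy_path E xs \<Longrightarrow> Suc i < length xs \<Longrightarrow> gdist E (xs ! i) (xs ! Suc i) \<le> 1"
  unfolding lazy_path_def using successively_nth[of "\<lambda>x y. gdist E x y \<le> 1" xs i] by simp

lemma lazy_path_append:
  assumes "lazy_path E xs" "lazy_path E ys" "gdist E (last xs) (hd ys) \<le> 1"
  shows "lazy_path E (xs @ ys)"
  using assms by (simp add: lazy_path_def successively_append_iff)

context graph_metric
begin

lemma lazy_path_if_is_path: "is_path E xs \<Longrightarrow> lazy_path E xs"
  by (auto simp: lazy_path_def is_path_iff_successively gdist_edge elim: successively_mono)

lemma lazy_path_rev: "lazy_path E xs \<Longrightarrow> lazy_path E (rev xs)"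
  by (auto simp: lazy_path_def gdist_commute)

lemma lazy_path_gdist_nth:
  assumes "lazy_path E xs" "i \<le> j" "j < length xs"
  shows "gdist E (xs ! i) (xs ! j) \<le> j - i"
  using assms(2,3)
proof (induction j rule: dec_induct)
  case (step j)
  have "gdist E (xs ! j) (xs ! Suc j) \<le> 1"
    using lazy_path_nth[OF assms(1) step.prems] .
  then show ?case
    using step gdist_triangle[of "xs ! i" "xs ! Suc j" "xs ! j"] by simp
qed simp

lemma lazy_path_gdist_lt_length:
  assumes "lazy_path E xs" "x \<in> set xs" "y \<in> set xs"
  shows "gdist E x y < length xs"
proof -
  obtain i j where "i < length xs" "j < length xs" "x = xs ! i" "y = xs ! j"
    using assms(2,3) by (auto simp: in_set_conv_nth)
  then show ?thesis
    using lazy_path_gdist_nth[OF assms(1), of i j] lazy_path_gdist_nth[OF assms(1), of j i]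
    by (cases "i \<le> j") (auto simp: gdist_commute)
qed

lemma real_gdist_triangle: "real (gdist E x z) \<le> real (gdist E x y) + real (gdist E y z)"
  using gdist_triangle[of x z y] by linarith

lemma gprod_commute: "gprod E w x y = gprod E w y x"
  unfolding gprod_def by (simp add: gdist_commute)

lemma gprod_change_base: "gprod E c x y - gdist E c w \<le> gprod E w x y"
  unfolding gprod_def
  using real_gdist_triangle[of x c w] real_gdist_triangle[of y c w] gdist_commute[of w c]
  by (simp add: field_simps)

lemma gdist_geodesic_ray: "geodesic_ray E \<gamma> \<Longrightarrow> i \<le> j \<Longrightarrow> gdist E (\<gamma> i) (\<gamma> j) = j - i"
  unfolding geodesic_ray_def by simp

lemma gdist_geodesic_ray_base: "geodesic_ray E \<gamma> \<Longrightarrow> \<gamma> 0 = c \<Longrightarrow> gdist E (\<gamma> i) c = i"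
  using gdist_geodesic_ray[of \<gamma> 0 i] gdist_commute by simp

lemma gprod_geodesic_ray:
  "geodesic_ray E \<gamma> \<Longrightarrow> \<gamma> 0 = c \<Longrightarrow> i \<le> j \<Longrightarrow> gprod E c (\<gamma> i) (\<gamma> j) = i"
  unfolding gprod_def using gdist_geodesic_ray_base gdist_geodesic_ray by (simp add: of_nat_diff)

lemma gprod_geodesic_ray_mono:
  assumes "geodesic_ray E \<gamma>" "\<gamma> 0 = c" "i \<le> i'"
  shows "gprod E c (\<gamma> i) y \<le> gprod E c (\<gamma> i') y"
proof -
  have "real (gdist E (\<gamma> i') y) \<le> real (gdist E (\<gamma> i') (\<gamma> i)) + real (gdist E (\<gamma> i) y)"
    by (rule real_gdist_triangle)
  moreover have "real (gdist E (\<gamma> i') (\<gamma> i)) = real i' - real i"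
    using gdist_geodesic_ray[OF assms(1,3)] gdist_commute assms(3) by (simp add: of_nat_diff)
  ultimately show ?thesis
    unfolding gprod_def using gdist_geodesic_ray_base[OF assms(1,2)] by simp
qed

lemma geodesic_rays_equiv:
  assumes \<gamma>: "geodesic_ray E \<gamma>" "\<gamma> 0 = c" and \<gamma>': "geodesic_ray E \<gamma>'" "\<gamma>' 0 = c"
    and close: "\<And>k. gdist E (\<gamma> k) (\<gamma>' k) \<le> T"
  shows "seq_equiv E c \<gamma> \<gamma>'"
  unfolding seq_equiv_def
proof
  fix M :: real
  obtain N :: nat where N: "M + real T / 2 \<le> real N" by (meson real_arch_simple)
  have "M \<le> gprod E c (\<gamma> i) (\<gamma>' j)" if "N \<le> i" "N \<le> j" for i j
  proof -
    have "real N - real T / 2 \<le> gprod E c (\<gamma> N) (\<gamma>' N)"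
      unfolding gprod_def
      using gdist_geodesic_ray_base[OF \<gamma>] gdist_geodesic_ray_base[OF \<gamma>'] close[of N] by simp
    also have "\<dots> \<le> gprod E c (\<gamma> i) (\<gamma>' N)"
      using gprod_geodesic_ray_mono[OF \<gamma> that(1)] .
    also have "\<dots> = gprod E c (\<gamma>' N) (\<gamma> i)" by (rule gprod_commute)
    also have "\<dots> \<le> gprod E c (\<gamma>' j) (\<gamma> i)"
      using gprod_geodesic_ray_mono[OF \<gamma>' that(2)] .
    also have "\<dots> = gprod E c (\<gamma> i) (\<gamma>' j)" by (rule gprod_commute)
    finally show ?thesis using N by linarith
  qed
  then show "\<exists>N. \<forall>i\<ge>N. \<forall>j\<ge>N. M \<le> gprod E c (\<gamma> i) (\<gamma>' j)" by blast
qed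

lemma geodesic_ray_shift_equiv:
  assumes "geodesic_ray E \<gamma>" "\<gamma> 0 = c"
  shows "seq_equiv E c \<gamma> (\<lambda>k. \<gamma> (m + k))"
  unfolding seq_equiv_def
proof
  fix M :: real
  obtain N :: nat where N: "M \<le> real N" by (meson real_arch_simple)
  have "M \<le> gprod E c (\<gamma> i) (\<gamma> (m + j))" if "N \<le> i" "N \<le> j" for i j
  proof (cases "i \<le> m + j")
    case True
    then show ?thesis using gprod_geodesic_ray[OF assms True] that N by simp
  next
    case False
    then have "gprod E c (\<gamma> (m + j)) (\<gamma> i) = m + j" using gprod_geodesic_ray[OF assms] by simp
    then show ?thesis using that N gprod_commute[of c "\<gamma> i"] by simp
  qed
  then show "\<exists>N. \<forall>i\<ge>N. \<forall>j\<ge>N. M \<le> gprod E c (\<gamma> i) (\<gamma> (m + j))" by blast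
qed

lemma lazy_path_geodesic_ray:
  assumes "geodesic_ray E \<gamma>" "a \<le> b"
  shows "lazy_path E (map \<gamma> [a..<Suc b])"
proof -
  have "gdist E (\<gamma> (a + i)) (\<gamma> (a + Suc i)) \<le> 1" for i
    using gdist_geodesic_ray[OF assms(1), of "a + i" "a + Suc i"] by simp
  then show ?thesis
    using assms(2) by (simp add: lazy_path_def successively_map successively_conv_nth del: upt_Suc)
qed

lemma lazy_path_between_geodesic_rays:
  assumes \<gamma>: "geodesic_ray E \<gamma>" "\<gamma> 0 = c" and \<gamma>': "geodesic_ray E \<gamma>'" "\<gamma>' 0 = c"
    and close: "gdist E (\<gamma> p) (\<gamma>' p) \<le> T"
  obtains L0 where "lazy_path E L0" "\<forall>x\<in>set L0. p - T \<le> gdist E x c"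
    "hd L0 = \<gamma> (p - T)" "last L0 = \<gamma>' (p - T)" "length L0 \<le> 3 * T + 3"
proof -
  let ?A = "map \<gamma> [p - T..<Suc p]" and ?B = "rev (map \<gamma>' [p - T..<Suc p])"
  obtain G where G: "is_path E G" "hd G = \<gamma> p" "last G = \<gamma>' p" "length G = Suc (gdist E (\<gamma> p) (\<gamma>' p))"
    by (rule gdist_path_ex)
  have G_lazy: "lazy_path E G" using G(1) by (rule lazy_path_if_is_path)
  have "G \<noteq> []" using G(4) by auto
  have "lazy_path E (G @ ?B)"
    using lazy_path_rev[OF lazy_path_geodesic_ray[OF \<gamma>'(1), of "p - T" p]] G_lazy G(3)
    by (intro lazy_path_append) (simp_all add: hd_rev last_map del: upt_Suc)
  then have "lazy_path E (?A @ G @ ?B)"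
    using lazy_path_geodesic_ray[OF \<gamma>(1), of "p - T" p] G(2) \<open>G \<noteq> []\<close>
    by (rule_tac lazy_path_append[of _ ?A "G @ ?B"]) (simp_all add: last_map del: upt_Suc)
  moreover have "p - T \<le> gdist E x c" if x: "x \<in> set (?A @ G @ ?B)" for x
  proof -
    consider "x \<in> set ?A" | "x \<in> set G" | "x \<in> set ?B" using x by auto
    then show ?thesis
    proof cases
      case 2
      have "hd G \<in> set G" using G_lazy by (simp add: lazy_path_def)
      then have "gdist E (\<gamma> p) x \<le> T"
        using lazy_path_gdist_lt_length[OF G_lazy _ 2] G(2,4) close by fastforce
      then show ?thesis
        using gdist_triangle[of "\<gamma> p" c x] gdist_geodesic_ray_base[OF \<gamma>, of p] by simp
    qed (auto simp: gdist_geodesic_ray_base[OF \<gamma>] gdist_geodesic_ray_base[OF \<gamma>'])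
  qed
  moreover have "hd (?A @ G @ ?B) = \<gamma> (p - T)" by (simp del: upt_Suc add: upt_conv_Cons)
  moreover have "last (?A @ G @ ?B) = \<gamma>' (p - T)" by (simp del: upt_Suc add: last_rev upt_conv_Cons)
  moreover have "length (?A @ G @ ?B) \<le> 3 * T + 3" using G(4) close by simp
  ultimately show thesis using that by blast
qed
end

section \<open>Gromov boundary of a hyperbolic graph\<close>

definition boundary_class :: "('v \<Rightarrow> 'v \<Rightarrow> bool) \<Rightarrow> 'v \<Rightarrow> (nat \<Rightarrow> 'v) \<Rightarrow> (nat \<Rightarrow> 'v) set" where
  "boundary_class E w s = {t. conv_inf E w t \<and> seq_equiv E w s t}"

lemma gromov_boundary_iff:
  "\<xi> \<in> gromov_boundary E w \<longleftrightarrow> (\<exists>s. conv_inf E w s \<and> \<xi> = boundary_class E w s)"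
  unfolding gromov_boundary_def boundary_class_def by blast

lemma boundary_class_in_gromov_boundary:
  "conv_inf E w s \<Longrightarrow> boundary_class E w s \<in> gromov_boundary E w"
  unfolding gromov_boundary_iff by blast

lemma dliminf_ge:
  assumes "\<forall>i\<ge>N. \<forall>j\<ge>N. a \<le> gprod E w (s i) (t j)"
  shows "ereal a \<le> dliminf E w s t"
proof -
  have "ereal a \<le> (INF i\<in>{N..}. INF j\<in>{N..}. ereal (gprod E w (s i) (t j)))"
    using assms by (auto intro!: INF_greatest)
  also have "\<dots> \<le> dliminf E w s t" unfolding dliminf_def by (rule SUP_upper) simp
  finally show ?thesis .
qed

lemma dliminf_gt_imp_eventually:
  assumes "ereal a < dliminf E w s t"
  shows "\<exists>N. \<forall>i\<ge>N. \<forall>j\<ge>N. a < gprod E w (s i) (t j)"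
proof -
  obtain N where N: "ereal a < (INF i\<in>{N..}. INF j\<in>{N..}. ereal (gprod E w (s i) (t j)))"
    using assms unfolding dliminf_def by (auto simp: less_SUP_iff)
  have "a < gprod E w (s i) (t j)" if "i \<ge> N" "j \<ge> N" for i j
  proof -
    have "(INF i\<in>{N..}. INF j\<in>{N..}. ereal (gprod E w (s i) (t j))) \<le> ereal (gprod E w (s i) (t j))"
      using that by (meson INF_lower2 atLeast_iff order_refl)
    then have "ereal a < ereal (gprod E w (s i) (t j))" using N by (rule order.strict_trans2[rotated])
    then show ?thesis by simp
  qed
  then show ?thesis by blast
qed

lemma bprod_ge_dliminf: "s \<in> \<xi> \<Longrightarrow> t \<in> \<eta> \<Longrightarrow> dliminf E w s t \<le> bprod E w \<xi> \<eta>"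
  unfolding bprod_def by (rule SUP_upper2[of "(s, t)"]) auto

lemma bprod_le: "(\<And>s t. s \<in> \<xi> \<Longrightarrow> t \<in> \<eta> \<Longrightarrow> dliminf E w s t \<le> b) \<Longrightarrow> bprod E w \<xi> \<eta> \<le> b"
  unfolding bprod_def by (rule SUP_least) auto

lemma eexp_neg_le:
  assumes "\<epsilon> > 0" "ereal a \<le> g"
  shows "eexp_neg \<epsilon> g \<le> exp (- \<epsilon> * a)"
  using assms by (cases g) (auto simp: eexp_neg_def)

lemma eexp_neg_ge:
  assumes "\<epsilon> > 0" "g \<le> ereal a" "a \<ge> 0"
  shows "exp (- \<epsilon> * a) \<le> eexp_neg \<epsilon> g"
  using assms by (cases g) (auto simp: eexp_neg_def)

definition outgoing_seq :: "('v \<Rightarrow> 'v \<Rightarrow> bool) \<Rightarrow> 'v \<Rightarrow> nat \<Rightarrow> nat \<Rightarrow> (nat \<Rightarrow> 'v) \<Rightarrow> bool" where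
  "outgoing_seq E c m B x \<longleftrightarrow>
     (\<forall>k. m + k \<le> gdist E (x k) c) \<and> (\<forall>k. gdist E (x k) (x (Suc k)) \<le> B)"

locale hyperbolic_graph = graph_metric +
  fixes \<delta> :: real
  assumes delta_nonneg: "\<delta> \<ge> 0"
    and four_point: "\<And>w x y z. min (gprod E w x z) (gprod E w y z) - \<delta> \<le> gprod E w x y"
begin

lemma four_point_chain:
  "min (gprod E w x u) (min (gprod E w u v) (gprod E w v y)) - 2 * \<delta> \<le> gprod E w x y"
  using four_point[where w=w and x=x and y=y and z=v] four_point[where w=w and x=x and y=v and z=u]
    gprod_commute[of w v u] gprod_commute[of w y v] delta_nonneg
  by linarith

lemma seq_equiv_sym: "seq_equiv E w s t \<Longrightarrow> seq_equiv E w t s"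
  unfolding seq_equiv_def using gprod_commute by metis

lemma seq_equiv_trans:
  assumes "seq_equiv E w s t" "seq_equiv E w t u"
  shows "seq_equiv E w s u"
  unfolding seq_equiv_def
proof
  fix M
  obtain N1 where N1: "\<forall>i\<ge>N1. \<forall>j\<ge>N1. M + \<delta> \<le> gprod E w (s i) (t j)"
    using assms(1) unfolding seq_equiv_def by blast
  obtain N2 where N2: "\<forall>i\<ge>N2. \<forall>j\<ge>N2. M + \<delta> \<le> gprod E w (t i) (u j)"
    using assms(2) unfolding seq_equiv_def by blast
  let ?N = "max N1 N2"
  have "M \<le> gprod E w (s i) (u j)" if "i \<ge> ?N" "j \<ge> ?N" for i j
  proof -
    have "M + \<delta> \<le> gprod E w (s i) (t ?N)" "M + \<delta> \<le> gprod E w (u j) (t ?N)"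
      using N1 N2 that gprod_commute[of w "u j" "t ?N"] by auto
    then show ?thesis using four_point[where w=w and x="s i" and y="u j" and z="t ?N"] by linarith
  qed
  then show "\<exists>N. \<forall>i\<ge>N. \<forall>j\<ge>N. M \<le> gprod E w (s i) (u j)" by blast
qed

lemma boundary_class_eq: "seq_equiv E w s t \<Longrightarrow> boundary_class E w s = boundary_class E w t"
  unfolding boundary_class_def by (blast intro: seq_equiv_trans seq_equiv_sym)

lemma seq_equiv_refl: "conv_inf E w s \<Longrightarrow> seq_equiv E w s s"
  unfolding conv_inf_def seq_equiv_def by blast

lemma mem_boundary_class: "conv_inf E w s \<Longrightarrow> s \<in> boundary_class E w s"
  unfolding boundary_class_def using seq_equiv_refl by blast

lemma boundary_point_eq_class:
  assumes "\<xi> \<in> gromov_boundary E w" "t \<in> \<xi>"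
  shows "conv_inf E w t" "\<xi> = boundary_class E w t"
proof -
  obtain s where s: "conv_inf E w s" "\<xi> = boundary_class E w s"
    using assms(1) unfolding gromov_boundary_iff by blast
  then have "seq_equiv E w s t" "conv_inf E w t"
    using assms(2) unfolding boundary_class_def by blast+
  then show "conv_inf E w t" "\<xi> = boundary_class E w t"
    using boundary_class_eq s(2) by simp_all
qed

definition hop :: nat where "hop = nat \<lceil>\<delta>\<rceil> + 1"

definition defect :: "nat \<Rightarrow> real" where "defect B = real hop * real B / 2 + \<delta>"

lemma gdist_outgoing_seq_le:
  assumes "outgoing_seq E c m B x"
  shows "gdist E (x a) (x (a + j)) \<le> j * B"
proof (induction j)
  case (Suc j)
  have "gdist E (x (a + j)) (x (a + Suc j)) \<le> B"
    using assms unfolding outgoing_seq_def by simp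
  then show ?case
    using Suc gdist_triangle[of "x a" "x (a + Suc j)" "x (a + j)"] by simp
qed simp

text \<open>Moving \<open>hop \<ge> \<delta>\<close> steps along the sequence gains \<open>hop\<close> in the lower bound, which pays
  for the loss \<open>\<delta>\<close> of one application of the four-point condition.\<close>

lemma gprod_outgoing_seq_ge:
  assumes "outgoing_seq E c m B x"
  shows "real m + real a - defect B \<le> gprod E c (x a) (x (a + j))"
proof (induction j arbitrary: a rule: less_induct)
  case (less j)
  have near: "real m + real a - real hop * real B / 2 \<le> gprod E c (x a) (x (a + i))"
    if "i \<le> hop" for i a
  proof -
    have "real (gdist E (x a) (x (a + i))) \<le> real i * real B"
      using gdist_outgoing_seq_le[OF assms, of a i] by (metis of_nat_le_iff of_nat_mult)
    moreover have "real m + real a \<le> gdist E (x a) c" "real m + real a + real i \<le> gdist E (x (a + i)) c"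
      using assms unfolding outgoing_seq_def by (metis add.assoc of_nat_add of_nat_le_iff)+
    moreover have "real i * real B \<le> real hop * real B"
      using that by (simp add: mult_right_mono)
    ultimately show ?thesis unfolding gprod_def by (simp add: field_simps)
  qed
  have hop: "real hop \<ge> \<delta>" "hop \<ge> 1" unfolding hop_def using delta_nonneg by linarith+
  show ?case
  proof (cases "j \<le> hop")
    case True
    then show ?thesis using near[of j a] delta_nonneg unfolding defect_def by linarith
  next
    case False
    let ?z = "x (a + hop)"
    have "real m + real (a + hop) - defect B \<le> gprod E c ?z (x (a + hop + (j - hop)))"
      using less.IH[of "j - hop" "a + hop"] False hop by simp
    then have "real m + real a + real hop - defect B \<le> gprod E c (x (a + j)) ?z"
      using False gprod_commute by simp
    then show ?thesis
      using four_point[where w=c and x="x a" and y="x (a + j)" and z="?z"] near[of hop a] hop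
      unfolding defect_def by linarith
  qed
qed

lemma gprod_outgoing_seqs_ge:
  assumes x: "outgoing_seq E c m B x" and y: "outgoing_seq E c m B y"
    and "gdist E (x k) (y k) \<le> R" "k \<le> i" "k \<le> j"
  shows "real m + real k - defect B - real R / 2 - 2 * \<delta> \<le> gprod E c (x i) (y j)"
proof -
  have "real m + real k - defect B \<le> gprod E c (x i) (x k)"
    using gprod_outgoing_seq_ge[OF x, of k "i - k"] \<open>k \<le> i\<close> gprod_commute by simp
  moreover have "real m + real k - defect B \<le> gprod E c (y k) (y j)"
    using gprod_outgoing_seq_ge[OF y, of k "j - k"] \<open>k \<le> j\<close> by simp
  moreover have "real m + real k - real R / 2 \<le> gprod E c (x k) (y k)"
  proof -
    have "real m + real k \<le> gdist E (x k) c" "real m + real k \<le> gdist E (y k) c"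
      using x y unfolding outgoing_seq_def by (metis of_nat_add of_nat_le_iff)+
    then show ?thesis using assms(3) unfolding gprod_def by (simp add: field_simps)
  qed
  moreover have "defect B \<ge> 0" unfolding defect_def using delta_nonneg by simp
  ultimately show ?thesis
    using four_point_chain[of c "x i" "x k" "y k" "y j"] by linarith
qed

lemma outgoing_seq_conv_inf:
  assumes "outgoing_seq E c m B x"
  shows "conv_inf E w x"
  unfolding conv_inf_def
proof
  fix M :: real
  obtain N :: nat where N: "M + defect B + gdist E c w \<le> real N"
    by (meson real_arch_simple)
  have "M \<le> gprod E w (x i) (x j)" if "N \<le> i" "N \<le> j" for i j
  proof -
    have "real m + real (min i j) - defect B \<le> gprod E c (x i) (x j)"
      using gprod_outgoing_seq_ge[OF assms, of "min i j" "max i j - min i j"] gprod_commute[of c]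
      by (cases "i \<le> j") (simp_all add: max_def min_def)
    then show ?thesis
      using gprod_change_base[of c "x i" "x j" w] N that by simp
  qed
  then show "\<exists>N. \<forall>i\<ge>N. \<forall>j\<ge>N. M \<le> gprod E w (x i) (x j)" by blast
qed

lemma gdist_geodesic_rays_le:
  assumes \<gamma>: "geodesic_ray E \<gamma>" "\<gamma> 0 = c" and \<gamma>': "geodesic_ray E \<gamma>'" "\<gamma>' 0 = c"
    and "n \<le> K" "real n + 2 * \<delta> \<le> gprod E c (\<gamma> K) (\<gamma>' K)"
  shows "real (gdist E (\<gamma> n) (\<gamma>' n)) \<le> 4 * \<delta>"
proof -
  have "gprod E c (\<gamma> n) (\<gamma> K) = n" "gprod E c (\<gamma>' K) (\<gamma>' n) = n"
    using gprod_geodesic_ray[OF \<gamma> \<open>n \<le> K\<close>] gprod_geodesic_ray[OF \<gamma>' \<open>n \<le> K\<close>]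
      gprod_commute[of c "\<gamma>' K"] by simp_all
  then have "real n - 2 * \<delta> \<le> gprod E c (\<gamma> n) (\<gamma>' n)"
    using four_point_chain[of c "\<gamma> n" "\<gamma> K" "\<gamma>' K" "\<gamma>' n"] assms(6) delta_nonneg by simp
  moreover have "gprod E c (\<gamma> n) (\<gamma>' n) = real n - real (gdist E (\<gamma> n) (\<gamma>' n)) / 2"
    unfolding gprod_def using gdist_geodesic_ray_base[OF \<gamma>] gdist_geodesic_ray_base[OF \<gamma>'] by simp
  ultimately show ?thesis by simp
qed

lemma geodesic_rays_split:
  assumes \<xi>: "\<xi> \<in> gromov_boundary E c" and \<eta>: "\<eta> \<in> gromov_boundary E c" and "\<xi> \<noteq> \<eta>"
    and \<gamma>: "geodesic_ray E \<gamma>" "\<gamma> 0 = c" "\<gamma> \<in> \<xi>" and \<gamma>': "geodesic_ray E \<gamma>'" "\<gamma>' 0 = c" "\<gamma>' \<in> \<eta>"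
  obtains p where "gdist E (\<gamma> p) (\<gamma>' p) \<le> T" "T < gdist E (\<gamma> (Suc p)) (\<gamma>' (Suc p))"
proof -
  have "\<exists>k. T < gdist E (\<gamma> k) (\<gamma>' k)"
  proof (rule ccontr)
    assume "\<not> ?thesis"
    then have "gdist E (\<gamma> k) (\<gamma>' k) \<le> T" for k by (simp add: not_less)
    then have "seq_equiv E c \<gamma> \<gamma>'" by (rule geodesic_rays_equiv[OF \<gamma>(1,2) \<gamma>'(1,2)])
    then show False
      using \<open>\<xi> \<noteq> \<eta>\<close> boundary_class_eq boundary_point_eq_class(2)[OF \<xi> \<gamma>(3)]
        boundary_point_eq_class(2)[OF \<eta> \<gamma>'(3)] by simp
  qed
  then obtain n where n: "T < gdist E (\<gamma> n) (\<gamma>' n)" "\<And>k. k < n \<Longrightarrow> gdist E (\<gamma> k) (\<gamma>' k) \<le> T"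
    using exists_least_iff[of "\<lambda>k. T < gdist E (\<gamma> k) (\<gamma>' k)"] by (meson not_less)
  moreover have "n \<noteq> 0" using n(1) \<gamma>(2) \<gamma>'(2) by (cases n) auto
  ultimately show thesis using that[of "n - 1"] by simp
qed

lemma bprod_le_if_geodesic_rays_diverge:
  assumes \<xi>: "\<xi> \<in> gromov_boundary E c" and \<eta>: "\<eta> \<in> gromov_boundary E c"
    and \<gamma>: "geodesic_ray E \<gamma>" "\<gamma> 0 = c" "\<gamma> \<in> \<xi>" and \<gamma>': "geodesic_ray E \<gamma>'" "\<gamma>' 0 = c" "\<gamma>' \<in> \<eta>"
    and diverge: "4 * \<delta> < real (gdist E (\<gamma> n) (\<gamma>' n))"
  shows "bprod E w \<xi> \<eta> \<le> ereal (real n + gdist E c w + 4 * \<delta>)"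
proof (rule bprod_le, rule ccontr)
  fix s t assume "s \<in> \<xi>" "t \<in> \<eta>"
  let ?M = "real n + gdist E c w + 4 * \<delta>"
  assume "\<not> dliminf E w s t \<le> ereal ?M"
  then have "ereal ?M < dliminf E w s t" by simp
  then obtain N1 where N1: "\<forall>i\<ge>N1. \<forall>j\<ge>N1. ?M < gprod E w (s i) (t j)"
    by (blast dest: dliminf_gt_imp_eventually)
  have "\<gamma> \<in> boundary_class E c s" "\<gamma>' \<in> boundary_class E c t"
    using boundary_point_eq_class(2)[OF \<xi> \<open>s \<in> \<xi>\<close>] boundary_point_eq_class(2)[OF \<eta> \<open>t \<in> \<eta>\<close>]
      \<gamma>(3) \<gamma>'(3) by simp_all
  then have "seq_equiv E c \<gamma> s" "seq_equiv E c t \<gamma>'"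
    unfolding boundary_class_def by (blast intro: seq_equiv_sym)+
  then obtain N2 N3 where
    N2: "\<forall>i\<ge>N2. \<forall>j\<ge>N2. ?M \<le> gprod E c (\<gamma> i) (s j)" and
    N3: "\<forall>i\<ge>N3. \<forall>j\<ge>N3. ?M \<le> gprod E c (t i) (\<gamma>' j)"
    unfolding seq_equiv_def by blast
  define K where "K = max (max N1 N2) (max N3 n)"
  have K: "N1 \<le> K" "N2 \<le> K" "N3 \<le> K" "n \<le> K" unfolding K_def by auto
  have "?M < gprod E w (s K) (t K)" using N1 K by blast
  then have "?M - gdist E c w \<le> gprod E c (s K) (t K)"
    using gprod_change_base[of w "s K" "t K" c] gdist_commute[of c w] by simp
  moreover have "?M \<le> gprod E c (\<gamma> K) (s K)" "?M \<le> gprod E c (t K) (\<gamma>' K)"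
    using N2 N3 K by blast+
  ultimately have "real n + 2 * \<delta> \<le> gprod E c (\<gamma> K) (\<gamma>' K)"
    using four_point_chain[of c "\<gamma> K" "s K" "t K" "\<gamma>' K"] delta_nonneg by linarith
  then show False
    using gdist_geodesic_rays_le[OF \<gamma>(1,2) \<gamma>'(1,2) K(4)] diverge by simp
qed

end

section \<open>Refining lazy paths outward\<close>

locale levelwise_connected_graph = graph_metric +
  fixes c :: 'v and D :: real
  assumes outward: "\<forall>v. \<exists>u. E v u \<and> gdist E u c = gdist E v c + 1"
    and connect_outward_neighbours: "\<forall>r::nat. \<forall>z x y. gdist E z c = r \<and>
        gdist E x c = r + 1 \<and> gdist E x z \<le> 1 \<and>
        gdist E y c = r + 1 \<and> gdist E y z \<le> 1 \<longrightarrow>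
        (\<exists>xs. is_path E xs \<and> hd xs = x \<and> last xs = y \<and>
           (\<forall>i<length xs. gdist E (xs ! i) c > r \<and> real (gdist E (xs ! i) x) \<le> D))"
    and bypass_level_edge: "\<forall>r::nat. \<forall>x y. gdist E x c = r \<and> gdist E y c = r \<and> E x y \<longrightarrow>
        (\<exists>xs. is_path E xs \<and> length xs \<ge> 3 \<and> hd xs = x \<and> last xs = y \<and>
           (\<forall>i. 0 < i \<and> i < length xs - 1 \<longrightarrow>
              gdist E (xs ! i) c > r \<and> real (gdist E (xs ! i) x) \<le> D))"
begin

definition reach :: nat where "reach = nat \<lceil>D\<rceil>"

lemma gdist_le_reach: "real (gdist E x y) \<le> D \<Longrightarrow> gdist E x y \<le> reach"
  unfolding reach_def by linarith

lemma gdist_base_le_Suc: "gdist E x y \<le> 1 \<Longrightarrow> gdist E x c \<le> Suc (gdist E y c)"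
  using gdist_triangle[of x c y] by simp

lemma outward_neighbours_lazy_path:
  assumes "gdist E z c = r" "gdist E x c = Suc r" "gdist E x z \<le> 1"
    "gdist E y c = Suc r" "gdist E y z \<le> 1"
  obtains P where "lazy_path E P" "hd P = x" "last P = y"
    "\<And>v. v \<in> set P \<Longrightarrow> Suc r \<le> gdist E v c \<and> gdist E v z \<le> Suc reach"
proof -
  obtain xs where xs: "is_path E xs" "hd xs = x" "last xs = y"
    "\<forall>i<length xs. r < gdist E (xs ! i) c \<and> real (gdist E (xs ! i) x) \<le> D"
    using connect_outward_neighbours[rule_format, where r=r and z=z and x=x and y=y] assms by auto
  have "Suc r \<le> gdist E v c \<and> gdist E v z \<le> Suc reach" if "v \<in> set xs" for v
    using xs(4) that gdist_triangle[of v z x] assms(3) gdist_le_reach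
    by (fastforce simp: in_set_conv_nth)
  then show thesis using that lazy_path_if_is_path[OF xs(1)] xs(2,3) by blast
qed

lemma level_edge_detour:
  assumes "gdist E x c = r" "gdist E y c = r" "E x y"
  obtains I where "I \<noteq> []" "E x (hd I)" "E (last I) y" "lazy_path E I"
    "\<And>v. v \<in> set I \<Longrightarrow> Suc r \<le> gdist E v c \<and> gdist E v x \<le> reach"
proof -
  obtain Q where Q: "is_path E Q" "3 \<le> length Q" "hd Q = x" "last Q = y"
    "\<forall>i. 0 < i \<and> i < length Q - 1 \<longrightarrow> r < gdist E (Q ! i) c \<and> real (gdist E (Q ! i) x) \<le> D"
    using bypass_level_edge[rule_format, where r=r and x=x and y=y] assms by auto
  define I where "I = butlast (tl Q)"
  have Q_eq: "Q = x # I @ [y]"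
    using Q(2-4) unfolding I_def
    by (cases Q; cases "tl Q" rule: rev_cases) auto
  have "I \<noteq> []" using Q(2) Q_eq by auto
  moreover have "successively E (x # I @ [y])" using Q(1) Q_eq by (simp add: is_path_iff_successively)
  then have "E x (hd I)" "E (last I) y" "successively E I"
    using \<open>I \<noteq> []\<close> by (auto simp: successively_Cons successively_append_iff)
  moreover have "Suc r \<le> gdist E v c \<and> gdist E v x \<le> reach" if v: "v \<in> set I" for v
  proof -
    obtain i where "i < length I" "v = I ! i" using v by (auto simp: in_set_conv_nth)
    then have "v = Q ! Suc i" "0 < Suc i" "Suc i < length Q - 1" using Q_eq by (simp_all add: nth_append)
    then show ?thesis using Q(5) gdist_le_reach by (metis Suc_leI)
  qed
  ultimately show thesis
    using that lazy_path_if_is_path \<open>I \<noteq> []\<close> by (simp add: is_path_iff_successively)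
qed

definition lift :: "nat \<Rightarrow> 'v \<Rightarrow> 'v \<Rightarrow> bool" where
  "lift m v u \<longleftrightarrow> (gdist E v c = m \<and> gdist E u c = Suc m \<and> gdist E u v \<le> 1) \<or> (m < gdist E v c \<and> u = v)"

lemma lift_exists: "m \<le> gdist E v c \<Longrightarrow> \<exists>u. lift m v u"
  using outward gdist_edge gdist_commute unfolding lift_def
  by (metis Suc_eq_plus1 le_neq_implies_less order_refl)

lemma lift_gdist: "lift m v u \<Longrightarrow> gdist E u v \<le> 1"
  unfolding lift_def by auto

lemma lift_geodesic_ray: "geodesic_ray E \<gamma> \<Longrightarrow> \<gamma> 0 = c \<Longrightarrow> lift j (\<gamma> j) (\<gamma> (Suc j))"
  unfolding lift_def
  using gdist_geodesic_ray[of \<gamma> j "Suc j"] gdist_geodesic_ray_base gdist_commute by simp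

lemma lift_segment_up:
  assumes "gdist E v c = m" "m < gdist E w c" "gdist E v w \<le> 1" "lift m v a"
  obtains P where "lazy_path E P" "hd P = a" "last P = w"
    "\<And>x. x \<in> set P \<Longrightarrow> Suc m \<le> gdist E x c \<and> gdist E x v \<le> Suc reach"
proof -
  have "gdist E w c = Suc m" using assms(1-3) gdist_base_le_Suc[of w v] gdist_commute by simp
  moreover have "gdist E a c = Suc m" "gdist E a v \<le> 1" using assms(1,4) unfolding lift_def by auto
  ultimately show thesis
    using outward_neighbours_lazy_path[OF assms(1)] that assms(3) gdist_commute by metis
qed

lemma lift_segment_level_edge:
  assumes "gdist E v c = m" "gdist E w c = m" "E v w" "lift m v a" "lift m w b"
  obtains P where "lazy_path E P" "hd P = a" "last P = b"
    "\<And>x. x \<in> set P \<Longrightarrow> Suc m \<le> gdist E x c \<and> (gdist E x v \<le> Suc reach \<or> gdist E x w \<le> Suc reach)"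
proof -
  obtain I where I: "I \<noteq> []" "E v (hd I)" "E (last I) w" "lazy_path E I"
    "\<And>x. x \<in> set I \<Longrightarrow> Suc m \<le> gdist E x c \<and> gdist E x v \<le> reach"
    using level_edge_detour[OF assms(1-3)] by blast
  have "hd I \<in> set I" "last I \<in> set I" using I(1) by simp_all
  then have "m < gdist E (hd I) c" "m < gdist E (last I) c" using I(5) by fastforce+
  moreover have "gdist E v (hd I) \<le> 1" "gdist E w (last I) \<le> 1"
    using gdist_edge[OF I(2)] gdist_edge[OF I(3)] gdist_commute[of w "last I"] by simp_all
  ultimately obtain P1 P3 where
    P1: "lazy_path E P1" "hd P1 = a" "last P1 = hd I"
      "\<And>x. x \<in> set P1 \<Longrightarrow> Suc m \<le> gdist E x c \<and> gdist E x v \<le> Suc reach" and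
    P3: "lazy_path E P3" "hd P3 = b" "last P3 = last I"
      "\<And>x. x \<in> set P3 \<Longrightarrow> Suc m \<le> gdist E x c \<and> gdist E x w \<le> Suc reach"
    using lift_segment_up[OF assms(1) _ _ assms(4)] lift_segment_up[OF assms(2) _ _ assms(5)]
    by metis
  have "lazy_path E (P1 @ I @ rev P3)"
    using P1(1,3) I(1,4) P3(1,3) lazy_path_rev[OF P3(1)]
    by (intro lazy_path_append) (auto simp: hd_rev lazy_path_def)
  moreover have "hd (P1 @ I @ rev P3) = a" "last (P1 @ I @ rev P3) = b"
    using P1(1,2) P3(1,2) by (auto simp: lazy_path_def last_rev)
  ultimately show thesis
    using that P1(4) P3(4) I(5) by fastforce
qed

text \<open>The segment replacing the edge (or vertex) \<open>v w\<close> of a lazy path one level further out.\<close>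

lemma lift_segment:
  assumes "m \<le> gdist E v c" "m \<le> gdist E w c" "gdist E v w \<le> 1" "lift m v a" "lift m w b"
  obtains P where "lazy_path E P" "hd P = a" "last P = b"
    "\<And>x. x \<in> set P \<Longrightarrow> Suc m \<le> gdist E x c \<and> (gdist E x v \<le> Suc reach \<or> gdist E x w \<le> Suc reach)"
proof (cases "v = w")
  case True
  show thesis
  proof (cases "gdist E v c = m")
    case on_level: True
    then have "gdist E a c = Suc m" "gdist E a v \<le> 1" "gdist E b c = Suc m" "gdist E b v \<le> 1"
      using assms(4,5) True unfolding lift_def by auto
    then show thesis
      using outward_neighbours_lazy_path[OF on_level] that True by metis
  next
    case False
    then have "a = v" "b = v" using assms True unfolding lift_def by auto
    then show thesis using that[of "[v]"] False assms(1) True by (simp add: lazy_path_def)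
  qed
next
  case False
  then have "E v w" using assms(3) gdist_le_1_iff by blast
  consider "gdist E v c = m" "gdist E w c = m" | "gdist E v c = m" "m < gdist E w c"
    | "m < gdist E v c" "gdist E w c = m" | "m < gdist E v c" "m < gdist E w c"
    using assms(1,2) by linarith
  then show thesis
  proof cases
    case 1
    then show thesis using lift_segment_level_edge[OF _ _ \<open>E v w\<close> assms(4,5)] that by metis
  next
    case 2
    then have "b = w" using assms(5) unfolding lift_def by auto
    then show thesis using lift_segment_up[OF 2 assms(3,4)] that by metis
  next
    case 3
    then have "a = v" using assms(4) unfolding lift_def by auto
    obtain P where "lazy_path E P" "hd P = b" "last P = v"
      "\<And>x. x \<in> set P \<Longrightarrow> Suc m \<le> gdist E x c \<and> gdist E x w \<le> Suc reach"
      using lift_segment_up[OF 3(2,1) _ assms(5)] assms(3) gdist_commute by metis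
    then show thesis
      using that[of "rev P"] lazy_path_rev \<open>a = v\<close> by (simp add: hd_rev last_rev)
  next
    case 4
    then have "a = v" "b = w" using assms(4,5) unfolding lift_def by auto
    then show thesis
      by (intro that[of "[v, w]"]) (use 4 assms(3) in \<open>auto simp: lazy_path_def\<close>)
  qed
qed

definition refines :: "nat \<Rightarrow> 'v list \<Rightarrow> 'v \<Rightarrow> 'v \<Rightarrow> 'v list \<Rightarrow> bool" where
  "refines m L a b L' \<longleftrightarrow> lazy_path E L' \<and> hd L' = a \<and> last L' = b \<and>
     (\<forall>x\<in>set L'. Suc m \<le> gdist E x c \<and> (\<exists>y\<in>set L. gdist E x y \<le> reach + 2)) \<and>
     (\<forall>y\<in>set L. \<exists>x\<in>set L'. gdist E x y \<le> reach + 2)"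

lemma refinement_exists:
  assumes "lazy_path E L" "\<forall>x\<in>set L. m \<le> gdist E x c" "lift m (hd L) a" "lift m (last L) b"
  shows "\<exists>L'. refines m L a b L'"
  using assms
proof (induction L arbitrary: a)
  case Nil then show ?case by (simp add: lazy_path_def)
next
  case (Cons v L0)
  show ?case
  proof (cases "L0 = []")
    case True
    then obtain P where P: "lazy_path E P" "hd P = a" "last P = b"
      "\<And>x. x \<in> set P \<Longrightarrow> Suc m \<le> gdist E x c \<and> gdist E x v \<le> Suc reach"
      using lift_segment[of m v v a b] Cons.prems by auto
    have "a \<in> set P" "gdist E a v \<le> 1"
      using P(1,2) lift_gdist Cons.prems(3) by (auto simp: lazy_path_def)
    then have "refines m (v # L0) a b P" using P True unfolding refines_def by force
    then show ?thesis by blast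
  next
    case False
    let ?w = "hd L0"
    have L0: "lazy_path E L0" "gdist E v ?w \<le> 1"
      using Cons.prems(1) False by (auto simp: lazy_path_def successively_Cons)
    have "m \<le> gdist E ?w c" using Cons.prems(2) False by simp
    then obtain u where u: "lift m ?w u" using lift_exists by blast
    then obtain L'' where L'': "refines m L0 u b L''"
      using Cons.IH[OF L0(1)] Cons.prems(2,4) False by auto
    obtain P where P: "lazy_path E P" "hd P = a" "last P = u"
      "\<And>x. x \<in> set P \<Longrightarrow> Suc m \<le> gdist E x c \<and> (gdist E x v \<le> Suc reach \<or> gdist E x ?w \<le> Suc reach)"
      using lift_segment[OF _ _ L0(2) _ u] Cons.prems(2,3) \<open>m \<le> gdist E ?w c\<close> by auto
    have "a \<in> set P" "gdist E a v \<le> 1"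
      using P(1,2) lift_gdist Cons.prems(3) by (auto simp: lazy_path_def)
    have "?w \<in> set L0" using False by simp
    have L''_props: "lazy_path E L''" "hd L'' = u" "last L'' = b"
      "\<forall>x\<in>set L''. Suc m \<le> gdist E x c \<and> (\<exists>y\<in>set L0. gdist E x y \<le> reach + 2)"
      "\<forall>y\<in>set L0. \<exists>x\<in>set L''. gdist E x y \<le> reach + 2"
      using L'' unfolding refines_def by blast+
    have "lazy_path E (P @ L'')"
      using lazy_path_append[OF P(1) L''_props(1)] P(3) L''_props(2) by simp
    moreover have "hd (P @ L'') = a" "last (P @ L'') = b"
      using P(1,2) L''_props(1,3) by (auto simp: lazy_path_def)
    moreover have "Suc m \<le> gdist E x c \<and> (\<exists>y\<in>set (v # L0). gdist E x y \<le> reach + 2)"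
      if "x \<in> set P" for x
      using P(4)[OF that] \<open>?w \<in> set L0\<close> by force
    moreover have "\<exists>x\<in>set (P @ L''). gdist E x v \<le> reach + 2"
      using \<open>a \<in> set P\<close> \<open>gdist E a v \<le> 1\<close> by force
    ultimately have "refines m (v # L0) a b (P @ L'')"
      using L''_props(4,5) unfolding refines_def by auto
    then show ?thesis by blast
  qed
qed

end

section \<open>Nested chains and their branches\<close>

locale nested_chains = levelwise_connected_graph +
  fixes \<gamma> \<gamma>' and m :: nat and L0
  assumes \<gamma>: "geodesic_ray E \<gamma>" "\<gamma> 0 = c" and \<gamma>': "geodesic_ray E \<gamma>'" "\<gamma>' 0 = c"
    and L0: "lazy_path E L0" "\<forall>x\<in>set L0. m \<le> gdist E x c" "hd L0 = \<gamma> m" "last L0 = \<gamma>' m"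
begin

primrec chain where
  "chain 0 = L0"
| "chain (Suc k) = (SOME L'. refines (m + k) (chain k) (\<gamma> (Suc (m + k))) (\<gamma>' (Suc (m + k))) L')"

lemma chain_Suc_refines:
  assumes "lazy_path E (chain k)" "\<forall>x\<in>set (chain k). m + k \<le> gdist E x c"
    "hd (chain k) = \<gamma> (m + k)" "last (chain k) = \<gamma>' (m + k)"
  shows "refines (m + k) (chain k) (\<gamma> (Suc (m + k))) (\<gamma>' (Suc (m + k))) (chain (Suc k))"
proof -
  have "\<exists>L'. refines (m + k) (chain k) (\<gamma> (Suc (m + k))) (\<gamma>' (Suc (m + k))) L'"
    using refinement_exists[OF assms(1,2)] lift_geodesic_ray[OF \<gamma>] lift_geodesic_ray[OF \<gamma>']
      assms(3,4) by simp
  then show ?thesis unfolding chain.simps by (rule someI_ex)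
qed

lemma chain_invariant:
  "lazy_path E (chain k) \<and> (\<forall>x\<in>set (chain k). m + k \<le> gdist E x c) \<and>
   hd (chain k) = \<gamma> (m + k) \<and> last (chain k) = \<gamma>' (m + k)"
proof (induction k)
  case 0
  then show ?case using L0 by simp
next
  case (Suc k)
  then have "refines (m + k) (chain k) (\<gamma> (Suc (m + k))) (\<gamma>' (Suc (m + k))) (chain (Suc k))"
    using chain_Suc_refines by blast
  then show ?case unfolding refines_def by simp
qed

lemma chain_lazy_path: "lazy_path E (chain k)"
  and chain_level: "x \<in> set (chain k) \<Longrightarrow> m + k \<le> gdist E x c"
  and chain_hd: "hd (chain k) = \<gamma> (m + k)"
  and chain_last: "last (chain k) = \<gamma>' (m + k)"
  using chain_invariant[of k] by auto

lemma chain_refines: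
  "refines (m + k) (chain k) (\<gamma> (Suc (m + k))) (\<gamma>' (Suc (m + k))) (chain (Suc k))"
  using chain_Suc_refines chain_invariant by blast

definition branch where
  "branch x \<longleftrightarrow> (\<forall>k. x k \<in> set (chain k) \<and> gdist E (x k) (x (Suc k)) \<le> reach + 2)"

lemma branch_outgoing_seq: "branch x \<Longrightarrow> outgoing_seq E c m (reach + 2) x"
  unfolding branch_def outgoing_seq_def using chain_level by blast

lemma branch_geodesic_rays: "branch (\<lambda>k. \<gamma> (m + k))" "branch (\<lambda>k. \<gamma>' (m + k))"
proof -
  have "hd (chain k) \<in> set (chain k)" "last (chain k) \<in> set (chain k)" for k
    using chain_lazy_path[of k] by (simp_all add: lazy_path_def)
  moreover have "gdist E (g (m + k)) (g (m + Suc k)) \<le> reach + 2" if "geodesic_ray E g" for g k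
    using gdist_geodesic_ray[OF that, of "m + k" "m + Suc k"] by simp
  ultimately show "branch (\<lambda>k. \<gamma> (m + k))" "branch (\<lambda>k. \<gamma>' (m + k))"
    unfolding branch_def using chain_hd chain_last \<gamma>(1) \<gamma>'(1) by simp_all
qed

lemma branch_tail_from:
  assumes "v \<in> set (chain k)"
  obtains y where "y 0 = v" "\<And>i. y i \<in> set (chain (k + i)) \<and> gdist E (y i) (y (Suc i)) \<le> reach + 2"
proof -
  have "\<exists>u'. (u' \<in> set (chain (k + Suc i)) \<and> (Suc i = 0 \<longrightarrow> u' = v)) \<and> gdist E u u' \<le> reach + 2"
    if "u \<in> set (chain (k + i)) \<and> (i = 0 \<longrightarrow> u = v)" for u i
    using chain_refines[of "k + i"] that gdist_commute unfolding refines_def by fastforce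
  then have "\<exists>y. \<forall>i. (y i \<in> set (chain (k + i)) \<and> (i = 0 \<longrightarrow> y i = v)) \<and>
      gdist E (y i) (y (Suc i)) \<le> reach + 2"
    using assms by (intro dependent_nat_choice) auto
  then show thesis using that by blast
qed

lemma branch_through:
  assumes "v \<in> set (chain N)"
  obtains x where "branch x" "x N = v"
  using assms
proof (induction N arbitrary: v thesis)
  case 0
  then show ?case using branch_tail_from[OF "0.prems"(2)] unfolding branch_def by (metis add_0)
next
  case (Suc N)
  obtain u where u: "u \<in> set (chain N)" "gdist E v u \<le> reach + 2"
    using chain_refines[of N] Suc.prems(2) unfolding refines_def by auto
  obtain x where x: "branch x" "x N = u" using Suc.IH[OF _ u(1)] by blast
  obtain y where y: "y 0 = v" "\<And>i. y i \<in> set (chain (Suc N + i)) \<and> gdist E (y i) (y (Suc i)) \<le> reach + 2"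
    using branch_tail_from[OF Suc.prems(2)] by blast
  define z where "z k = (if k \<le> N then x k else y (k - Suc N))" for k
  have "z k \<in> set (chain k) \<and> gdist E (z k) (z (Suc k)) \<le> reach + 2" for k
  proof (cases "k < N")
    case True
    then show ?thesis using x(1) unfolding z_def branch_def by simp
  next
    case False
    show ?thesis
    proof (cases "k = N")
      case True
      then show ?thesis using x(2) y(1) u gdist_commute[of v u] unfolding z_def by simp
    next
      case False
      then have "k = Suc N + (k - Suc N)" "Suc k - Suc N = Suc (k - Suc N)" using \<open>\<not> k < N\<close> by simp_all
      then show ?thesis using y(2)[of "k - Suc N"] False \<open>\<not> k < N\<close> unfolding z_def by simp
    qed
  qed
  then have "branch z" unfolding branch_def by blast
  moreover have "z (Suc N) = v" using y(1) unfolding z_def by simp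
  ultimately show ?case using Suc.prems(1) by blast
qed

end

section \<open>Compactness and connectedness criteria\<close>

context Metric_space
begin

definition echain_joined :: "'a set \<Rightarrow> real \<Rightarrow> 'a \<Rightarrow> 'a \<Rightarrow> bool" where
  "echain_joined S e a b \<longleftrightarrow>
     (\<exists>ps. ps \<noteq> [] \<and> hd ps = a \<and> last ps = b \<and> set ps \<subseteq> S \<and> successively (\<lambda>x y. d x y < e) ps)"

lemma echain_joined_step: "a \<in> S \<Longrightarrow> b \<in> S \<Longrightarrow> d a b < e \<Longrightarrow> echain_joined S e a b"
  unfolding echain_joined_def by (intro exI[of _ "[a, b]"]) simp

lemma echain_joined_sym:
  assumes "echain_joined S e a b" shows "echain_joined S e b a"
proof -
  obtain ps where ps: "ps \<noteq> []" "hd ps = a" "last ps = b" "set ps \<subseteq> S"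
    "successively (\<lambda>x y. d x y < e) ps"
    using assms unfolding echain_joined_def by blast
  have "successively (\<lambda>x y. d x y < e) (rev ps)"
    using ps(5) by (simp add: commute)
  then show ?thesis
    unfolding echain_joined_def using ps by (intro exI[of _ "rev ps"]) (simp add: hd_rev last_rev)
qed

lemma echain_joined_trans:
  assumes "S \<subseteq> M" "e > 0" "echain_joined S e a b" "echain_joined S e b c"
  shows "echain_joined S e a c"
proof -
  obtain ps qs where ps: "ps \<noteq> []" "hd ps = a" "last ps = b" "set ps \<subseteq> S" "successively (\<lambda>x y. d x y < e) ps"
    and qs: "qs \<noteq> []" "hd qs = b" "last qs = c" "set qs \<subseteq> S" "successively (\<lambda>x y. d x y < e) qs"
    using assms(3,4) unfolding echain_joined_def by blast
  have "b \<in> M" using ps(1,3,4) assms(1) last_in_set by blast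
  then have "successively (\<lambda>x y. d x y < e) (ps @ qs)"
    using ps qs assms(2) by (simp add: successively_append_iff)
  then show ?thesis unfolding echain_joined_def using ps qs by (intro exI[of _ "ps @ qs"]) auto
qed

lemma connectedin_if_echain_joined:
  assumes cpt: "compactin mtopology S"
    and joined: "\<And>e a b. e > 0 \<Longrightarrow> a \<in> S \<Longrightarrow> b \<in> S \<Longrightarrow> echain_joined S e a b"
  shows "connectedin mtopology S"
  unfolding connectedin
proof (intro conjI notI)
  have SM: "S \<subseteq> M" using compactin_subset_topspace[OF cpt] by simp
  then show "S \<subseteq> topspace mtopology" by simp
  assume "\<exists>U V. openin mtopology U \<and> openin mtopology V \<and> S \<subseteq> U \<union> V \<and>
    U \<inter> V \<inter> S = {} \<and> U \<inter> S \<noteq> {} \<and> V \<inter> S \<noteq> {}"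
  then obtain U V a b where UV: "openin mtopology U" "openin mtopology V" "S \<subseteq> U \<union> V"
    "U \<inter> V \<inter> S = {}" and a: "a \<in> U" "a \<in> S" and b: "b \<in> V" "b \<in> S"
    by (metis disjoint_iff inf_commute)
  obtain e where e: "e > 0" "\<forall>x\<in>S. \<exists>W\<in>{U, V}. mball x e \<subseteq> W"
    using lebesgue_number[OF cpt, of "{U, V}"] UV(1-3) by auto
  obtain ps where ps: "ps \<noteq> []" "hd ps = a" "last ps = b" "set ps \<subseteq> S"
    "successively (\<lambda>x y. d x y < e) ps"
    using joined[OF e(1) a(2) b(2)] unfolding echain_joined_def by blast
  have "ps ! i \<in> U" if "i < length ps" for i
    using that
  proof (induction i)
    case 0 then show ?case using ps a by (simp add: hd_conv_nth)
  next
    case (Suc i)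
    have S: "ps ! i \<in> S" "ps ! Suc i \<in> S" using ps(4) Suc.prems by auto
    then have M: "ps ! i \<in> M" "ps ! Suc i \<in> M" using SM by auto
    obtain W where W: "W \<in> {U, V}" "mball (ps ! i) e \<subseteq> W" using e(2) S(1) by blast
    have "ps ! i \<in> mball (ps ! i) e" using M e(1) by simp
    moreover have "ps ! Suc i \<in> mball (ps ! i) e"
      using M successively_nth[OF ps(5) Suc.prems] by simp
    moreover have "ps ! i \<in> U" using Suc by simp
    ultimately show ?case using W S(1) UV(4) by blast
  qed
  then have "b \<in> U" using ps(1,3) by (metis last_conv_nth diff_less length_greater_0_conv zero_less_one)
  then show False using b UV(4) by blast
qed
end

lemma subseq_eventually_constant_coords:
  fixes \<beta> :: "nat \<Rightarrow> nat \<Rightarrow> 'a"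
  assumes fin: "\<And>k. finite (F k)" and mem: "\<And>n k. \<beta> n k \<in> F k"
  obtains r f where "strict_mono r" "\<And>N n. N < n \<Longrightarrow> \<beta> (r n) N = f N"
proof -
  define P where "P N s \<longleftrightarrow> (\<forall>k. \<beta> (s k) N = \<beta> (s 0) N)" for N and s :: "nat \<Rightarrow> nat"
  interpret subseqs P
  proof
    fix N and s :: "nat \<Rightarrow> nat"
    let ?g = "\<lambda>k. \<beta> (s k) N"
    have "range ?g \<subseteq> F N" using mem by blast
    then have "finite (range ?g)" using fin finite_subset by blast
    then obtain a0 where inf: "infinite {a. ?g a = ?g a0}"
      using pigeonhole_infinite[of UNIV ?g] by auto
    let ?r = "enumerate {a. ?g a = ?g a0}"
    have "?g (?r k) = ?g a0" for k using enumerate_in_set[OF inf, of k] by simp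
    then have "P N (s \<circ> ?r)" unfolding P_def by simp
    then show "\<exists>r'. strict_mono r' \<and> P N (s \<circ> r')" using strict_mono_enumerate[OF inf] by blast
  qed
  have "P N (diagseq \<circ> (+) (Suc N))" for N
  proof (rule diagseq_holds)
    fix r s :: "nat \<Rightarrow> nat" and n assume "P n s"
    then have "\<beta> (s (r k)) n = \<beta> (s 0) n" for k unfolding P_def by (rule spec)
    then show "P n (s \<circ> r)" unfolding P_def by simp
  qed
  then have "\<beta> (diagseq n) N = \<beta> (diagseq (Suc N)) N" if "N < n" for N n
  proof -
    have "\<beta> ((diagseq \<circ> (+) (Suc N)) (n - Suc N)) N = \<beta> ((diagseq \<circ> (+) (Suc N)) 0) N"
      using \<open>P N (diagseq \<circ> (+) (Suc N))\<close> unfolding P_def by (rule spec)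
    then show ?thesis using that by simp
  qed
  then show thesis by (rule that[OF subseq_diagseq])
qed

section \<open>The limit set of the branches\<close>

lemma exp_decay_lt:
  assumes "\<epsilon> > 0" "e > 0"
  shows "\<exists>N::nat. k * exp (- \<epsilon> * (real N - X)) < e"
proof -
  define t where "t = \<bar>k\<bar> / e + 1"
  have t: "t > 0" "\<bar>k\<bar> < e * t" using assms(2) by (auto simp: t_def field_simps)
  obtain N :: nat where "ln t / \<epsilon> + X < real N" by (meson reals_Archimedean2)
  then have "ln t < \<epsilon> * (real N - X)" using assms(1) by (simp add: field_simps)
  then have "exp (ln t) < exp (\<epsilon> * (real N - X))" by (rule exp_less_mono)
  then have "e * t < e * exp (\<epsilon> * (real N - X))" using t(1) assms(2) by simp
  then have "k < e * exp (\<epsilon> * (real N - X))" using t(2) abs_ge_self[of k] by linarith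
  then have "k / exp (\<epsilon> * (real N - X)) < e" by (simp add: divide_less_eq mult.commute)
  then show ?thesis by (intro exI[of _ N]) (simp only: mult_minus_left exp_minus divide_inverse)
qed

locale visual_boundary = hyperbolic_graph +
  fixes c w and \<epsilon> k1 k2 :: real and \<rho>
  assumes eps_pos: "\<epsilon> > 0" and k1_pos: "k1 > 0" and k2_pos: "k2 > 0"
    and metric: "Metric_space (gromov_boundary E c) \<rho>"
    and visual_lower: "\<And>\<xi> \<eta>. \<xi> \<in> gromov_boundary E c \<Longrightarrow> \<eta> \<in> gromov_boundary E c \<Longrightarrow>
      k1 * eexp_neg \<epsilon> (bprod E w \<xi> \<eta>) \<le> \<rho> \<xi> \<eta>"
    and visual_upper: "\<And>\<xi> \<eta>. \<xi> \<in> gromov_boundary E c \<Longrightarrow> \<eta> \<in> gromov_boundary E c \<Longrightarrow>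
      \<rho> \<xi> \<eta> \<le> k2 * eexp_neg \<epsilon> (bprod E w \<xi> \<eta>)"
begin

definition visual_offset :: "nat \<Rightarrow> nat \<Rightarrow> real" where
  "visual_offset B R = defect B + real R / 2 + 2 * \<delta> + real (gdist E c w)"

lemma visual_dist_le:
  assumes "conv_inf E c x" "conv_inf E c y" "\<forall>i\<ge>N. \<forall>j\<ge>N. a \<le> gprod E w (x i) (y j)"
  shows "\<rho> (boundary_class E c x) (boundary_class E c y) \<le> k2 * exp (- \<epsilon> * a)"
proof -
  let ?\<xi> = "boundary_class E c x" and ?\<eta> = "boundary_class E c y"
  have "ereal a \<le> dliminf E w x y" using assms(3) by (rule dliminf_ge)
  also have "\<dots> \<le> bprod E w ?\<xi> ?\<eta>"
    using mem_boundary_class[OF assms(1)] mem_boundary_class[OF assms(2)] by (rule bprod_ge_dliminf)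
  finally have bound: "eexp_neg \<epsilon> (bprod E w ?\<xi> ?\<eta>) \<le> exp (- \<epsilon> * a)"
    by (rule eexp_neg_le[OF eps_pos])
  have "?\<xi> \<in> gromov_boundary E c" "?\<eta> \<in> gromov_boundary E c"
    using assms(1,2) by (simp_all add: boundary_class_in_gromov_boundary)
  then have "\<rho> ?\<xi> ?\<eta> \<le> k2 * eexp_neg \<epsilon> (bprod E w ?\<xi> ?\<eta>)" by (rule visual_upper)
  also have "\<dots> \<le> k2 * exp (- \<epsilon> * a)" using bound k2_pos by simp
  finally show ?thesis .
qed

lemma visual_dist_outgoing_seqs_le:
  assumes x: "outgoing_seq E c m B x" and y: "outgoing_seq E c m B y" and "gdist E (x k) (y k) \<le> R"
  shows "\<rho> (boundary_class E c x) (boundary_class E c y)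
    \<le> k2 * exp (- \<epsilon> * (real m + real k - visual_offset B R))"
proof (rule visual_dist_le[OF outgoing_seq_conv_inf[OF x] outgoing_seq_conv_inf[OF y]], intro allI impI)
  fix i j assume "k \<le> i" "k \<le> j"
  then have "real m + real k - defect B - real R / 2 - 2 * \<delta> \<le> gprod E c (x i) (y j)"
    by (rule gprod_outgoing_seqs_ge[OF x y assms(3)])
  then show "real m + real k - visual_offset B R \<le> gprod E w (x i) (y j)"
    using gprod_change_base[of c "x i" "y j" w] unfolding visual_offset_def by linarith
qed

lemma visual_dist_ge_geodesic_rays:
  assumes \<xi>: "\<xi> \<in> gromov_boundary E c" and \<eta>: "\<eta> \<in> gromov_boundary E c"
    and \<gamma>: "geodesic_ray E \<gamma>" "\<gamma> 0 = c" "\<gamma> \<in> \<xi>" and \<gamma>': "geodesic_ray E \<gamma>'" "\<gamma>' 0 = c" "\<gamma>' \<in> \<eta>"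
    and diverge: "4 * \<delta> < real (gdist E (\<gamma> n) (\<gamma>' n))"
  shows "k1 * exp (- \<epsilon> * (real n + gdist E c w + 4 * \<delta>)) \<le> \<rho> \<xi> \<eta>"
proof -
  have "exp (- \<epsilon> * (real n + gdist E c w + 4 * \<delta>)) \<le> eexp_neg \<epsilon> (bprod E w \<xi> \<eta>)"
    using eexp_neg_ge[OF eps_pos bprod_le_if_geodesic_rays_diverge[OF assms]] delta_nonneg by simp
  then have "k1 * exp (- \<epsilon> * (real n + gdist E c w + 4 * \<delta>)) \<le> k1 * eexp_neg \<epsilon> (bprod E w \<xi> \<eta>)"
    using k1_pos by simp
  also have "\<dots> \<le> \<rho> \<xi> \<eta>" by (rule visual_lower[OF \<xi> \<eta>])
  finally show ?thesis .
qed

end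

sublocale visual_boundary \<subseteq> bdry: Metric_space "gromov_boundary E c" \<rho>
  by (rule metric)

locale visual_nested_chains =
  nested_chains E c D \<gamma> \<gamma>' m L0 + visual_boundary E \<delta> c w \<epsilon> k1 k2 \<rho>
  for E c D \<gamma> \<gamma>' m L0 \<delta> w \<epsilon> k1 k2 \<rho>
begin

definition limit_set where "limit_set = {boundary_class E c x | x. branch x}"

lemma limit_set_subset: "limit_set \<subseteq> gromov_boundary E c"
proof
  fix a assume "a \<in> limit_set"
  then obtain x where "branch x" "a = boundary_class E c x" unfolding limit_set_def by blast
  moreover from this have "conv_inf E c x" by (blast intro: outgoing_seq_conv_inf branch_outgoing_seq)
  ultimately show "a \<in> gromov_boundary E c" by (simp add: boundary_class_in_gromov_boundary)
qed

lemma visual_dist_branches_le: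
  assumes "branch x" "branch y" "gdist E (x k) (y k) \<le> R"
  shows "\<rho> (boundary_class E c x) (boundary_class E c y)
    \<le> k2 * exp (- \<epsilon> * (real m + real k - visual_offset (reach + 2) R))"
  using visual_dist_outgoing_seqs_le[OF branch_outgoing_seq[OF assms(1)] branch_outgoing_seq[OF assms(2)]
      assms(3)] .

lemma limit_set_diam:
  assumes "a \<in> limit_set" "b \<in> limit_set"
  shows "\<rho> a b \<le> k2 * exp (- \<epsilon> * (real m - visual_offset (reach + 2) (length L0)))"
proof -
  obtain x y where xy: "branch x" "branch y" "a = boundary_class E c x" "b = boundary_class E c y"
    using assms unfolding limit_set_def by blast
  then have "x 0 \<in> set (chain 0)" "y 0 \<in> set (chain 0)" unfolding branch_def by blast+
  then have "gdist E (x 0) (y 0) \<le> length L0"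
    using lazy_path_gdist_lt_length[OF L0(1), of "x 0" "y 0"] by simp
  then show ?thesis using visual_dist_branches_le[OF xy(1,2), of 0] xy(3,4) by simp
qed

lemma boundary_point_in_limit_set:
  assumes "geodesic_ray E g" "g 0 = c" "branch (\<lambda>k. g (m + k))" "\<xi> \<in> gromov_boundary E c" "g \<in> \<xi>"
  shows "\<xi> \<in> limit_set"
proof -
  have "\<xi> = boundary_class E c (\<lambda>k. g (m + k))"
    using boundary_point_eq_class(2)[OF assms(4,5)] boundary_class_eq[OF geodesic_ray_shift_equiv[OF assms(1,2)]]
    by simp
  then show ?thesis unfolding limit_set_def using assms(3) by blast
qed

text \<open>The limit set is compact by a diagonal argument: each level of the nested chains is finite.\<close>

lemma limit_set_compact: "compactin bdry.mtopology limit_set"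
  unfolding bdry.compactin_sequentially
proof (intro conjI allI impI)
  show "limit_set \<subseteq> gromov_boundary E c" by (rule limit_set_subset)
  fix \<sigma> :: "nat \<Rightarrow> _" assume "range \<sigma> \<subseteq> limit_set"
  then have "\<forall>n. \<exists>x. branch x \<and> \<sigma> n = boundary_class E c x" unfolding limit_set_def by blast
  then obtain \<beta> where "\<forall>n. branch (\<beta> n) \<and> \<sigma> n = boundary_class E c (\<beta> n)"
    using choice[of "\<lambda>n x. branch x \<and> \<sigma> n = boundary_class E c x"] by blast
  then have \<beta>: "\<And>n. branch (\<beta> n)" "\<And>n. \<sigma> n = boundary_class E c (\<beta> n)" by simp_all
  have "\<beta> n k \<in> set (chain k)" for n k using \<beta>(1) unfolding branch_def by blast
  then obtain r f where r: "strict_mono r" and f: "\<And>N n. N < n \<Longrightarrow> \<beta> (r n) N = f N"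
    using subseq_eventually_constant_coords[of "\<lambda>k. set (chain k)" \<beta>] by blast
  have "branch f"
    unfolding branch_def
  proof
    fix k
    have "f k = \<beta> (r (Suc (Suc k))) k" "f (Suc k) = \<beta> (r (Suc (Suc k))) (Suc k)"
      using f by simp_all
    then show "f k \<in> set (chain k) \<and> gdist E (f k) (f (Suc k)) \<le> reach + 2"
      using \<beta>(1)[of "r (Suc (Suc k))"] unfolding branch_def by simp
  qed
  then have lim: "boundary_class E c f \<in> limit_set" unfolding limit_set_def by blast
  have "limitin bdry.mtopology (\<sigma> \<circ> r) (boundary_class E c f) sequentially"
    unfolding bdry.limitin_metric
  proof (intro conjI allI impI)
    show "boundary_class E c f \<in> gromov_boundary E c" using lim limit_set_subset by blast
    fix e :: real assume "e > 0"
    then obtain N :: nat where N: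
      "k2 * exp (- \<epsilon> * (real N - (visual_offset (reach + 2) 0 - real m))) < e"
      using exp_decay_lt[OF eps_pos] by blast
    have "\<rho> (\<sigma> (r n)) (boundary_class E c f) < e" if "N < n" for n
    proof -
      have "\<rho> (\<sigma> (r n)) (boundary_class E c f)
          \<le> k2 * exp (- \<epsilon> * (real m + real N - visual_offset (reach + 2) 0))"
        using visual_dist_branches_le[OF \<beta>(1) \<open>branch f\<close>, of "r n" N 0] f[OF that] \<beta>(2) by simp
      then show ?thesis using N by (simp add: algebra_simps)
    qed
    moreover have "\<sigma> (r n) \<in> gromov_boundary E c" for n
      using \<open>range \<sigma> \<subseteq> limit_set\<close> limit_set_subset by blast
    ultimately show "\<forall>\<^sub>F n in sequentially. (\<sigma> \<circ> r) n \<in> gromov_boundary E c \<and>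
        \<rho> ((\<sigma> \<circ> r) n) (boundary_class E c f) < e"
      unfolding eventually_sequentially by (intro exI[of _ "Suc N"]) simp
  qed
  then show "\<exists>l r. l \<in> limit_set \<and> strict_mono r \<and> limitin bdry.mtopology (\<sigma> \<circ> r) l sequentially"
    using lim r by blast
qed

lemma branches_echain_joined:
  assumes "e > 0" "branch x" "branch y"
  shows "bdry.echain_joined limit_set e (boundary_class E c x) (boundary_class E c y)"
proof -
  obtain N :: nat where N: "k2 * exp (- \<epsilon> * (real N - (visual_offset (reach + 2) 1 - real m))) < e"
    using exp_decay_lt[OF eps_pos assms(1)] by blast
  have in_limit_set: "boundary_class E c z \<in> limit_set" if "branch z" for z
    using that unfolding limit_set_def by blast
  have step: "bdry.echain_joined limit_set e (boundary_class E c z) (boundary_class E c z')"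
    if "branch z" "branch z'" "gdist E (z N) (z' N) \<le> 1" for z z'
  proof (rule bdry.echain_joined_step)
    show "boundary_class E c z \<in> limit_set" "boundary_class E c z' \<in> limit_set"
      using that by (simp_all add: in_limit_set)
    show "\<rho> (boundary_class E c z) (boundary_class E c z') < e"
      using visual_dist_branches_le[OF that] N by (simp add: algebra_simps)
  qed
  have trans: "bdry.echain_joined limit_set e a b \<Longrightarrow> bdry.echain_joined limit_set e b b'
      \<Longrightarrow> bdry.echain_joined limit_set e a b'" for a b b'
    by (rule bdry.echain_joined_trans[OF limit_set_subset assms(1)])
  define x0 where "x0 = (\<lambda>k. \<gamma> (m + k))"
  have x0: "branch x0" using branch_geodesic_rays(1) unfolding x0_def .
  have chain_ne: "chain N \<noteq> []" using chain_lazy_path[of N] by (simp add: lazy_path_def)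
  have "bdry.echain_joined limit_set e (boundary_class E c z) (boundary_class E c x0)"
    if "j < length (chain N)" "branch z" "z N = chain N ! j" for j z
    using that
  proof (induction j arbitrary: z)
    case 0
    then have "z N = x0 N" using chain_hd[of N] hd_conv_nth[OF chain_ne] unfolding x0_def by simp
    then show ?case using step[OF "0.prems"(2) x0] by simp
  next
    case (Suc j)
    obtain z' where z': "branch z'" "z' N = chain N ! j"
      using branch_through[of "chain N ! j" N] Suc.prems(1) by auto
    have "gdist E (chain N ! j) (chain N ! Suc j) \<le> 1"
      using lazy_path_nth[OF chain_lazy_path Suc.prems(1)] .
    then have "gdist E (z N) (z' N) \<le> 1" using Suc.prems(3) z'(2) gdist_commute by simp
    then show ?case using trans[OF step[OF Suc.prems(2) z'(1)] Suc.IH[OF _ z']] Suc.prems(1) by simp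
  qed
  moreover have "\<exists>j<length (chain N). z N = chain N ! j" if "branch z" for z
  proof -
    have "z N \<in> set (chain N)" using that unfolding branch_def by blast
    then show ?thesis by (simp add: in_set_conv_nth eq_commute)
  qed
  ultimately have joined_x0: "bdry.echain_joined limit_set e (boundary_class E c z) (boundary_class E c x0)"
    if "branch z" for z
    using that by blast
  show ?thesis
    using trans[OF joined_x0[OF assms(2)] bdry.echain_joined_sym[OF joined_x0[OF assms(3)]]] .
qed

lemma limit_set_connected: "connectedin bdry.mtopology limit_set"
proof (rule bdry.connectedin_if_echain_joined[OF limit_set_compact])
  fix e :: real and a b assume "e > 0" "a \<in> limit_set" "b \<in> limit_set"
  then obtain x y where "branch x" "branch y" "a = boundary_class E c x" "b = boundary_class E c y"
    unfolding limit_set_def by blast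
  then show "bdry.echain_joined limit_set e a b"
    using branches_echain_joined[OF \<open>e > 0\<close>] by simp
qed

end

section \<open>Linear connectedness of the boundary\<close>

locale linear_connectivity_setting =
  levelwise_connected_graph E c D + visual_boundary E \<delta> c w \<epsilon> k1 k2 \<rho> for E c D \<delta> w \<epsilon> k1 k2 \<rho> +
  assumes rays: "\<forall>\<xi>\<in>gromov_boundary E c. \<exists>\<gamma>. geodesic_ray E \<gamma> \<and> \<gamma> 0 = c \<and> \<gamma> \<in> \<xi>"
begin

definition gap :: nat where "gap = nat \<lfloor>4 * \<delta>\<rfloor>"

definition ratio :: real where
  "ratio = k2 / k1 * exp (\<epsilon> * (real gap + 1 + gdist E c w + 4 * \<delta> + visual_offset (reach + 2) (3 * gap + 3)))"

lemma ratio_pos: "ratio > 0"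
  unfolding ratio_def using k1_pos k2_pos by simp

lemma visual_bound_le_ratio:
  assumes "l \<le> 3 * gap + 3"
  shows "k2 * exp (- \<epsilon> * (real (p - gap) - visual_offset (reach + 2) l))
    \<le> ratio * (k1 * exp (- \<epsilon> * (real (Suc p) + gdist E c w + 4 * \<delta>)))"
proof -
  have "real p - real gap \<le> real (p - gap)" by linarith
  moreover have "visual_offset (reach + 2) l \<le> visual_offset (reach + 2) (3 * gap + 3)"
    using assms unfolding visual_offset_def by simp
  ultimately have "k2 * exp (- \<epsilon> * (real (p - gap) - visual_offset (reach + 2) l))
      \<le> k2 * exp (- \<epsilon> * (real p - real gap - visual_offset (reach + 2) (3 * gap + 3)))"
    using eps_pos k2_pos by (simp add: mult_left_mono)
  also have "\<dots> = ratio * (k1 * exp (- \<epsilon> * (real (Suc p) + gdist E c w + 4 * \<delta>)))"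
    unfolding ratio_def using k1_pos by (simp add: exp_add[symmetric] field_simps)
  finally show ?thesis .
qed

lemma distinct_boundary_points_in_small_continuum:
  assumes \<xi>: "\<xi> \<in> gromov_boundary E c" and \<eta>: "\<eta> \<in> gromov_boundary E c" and "\<xi> \<noteq> \<eta>"
  shows "\<exists>K\<subseteq>gromov_boundary E c. \<xi> \<in> K \<and> \<eta> \<in> K \<and> compactin bdry.mtopology K \<and>
    connectedin bdry.mtopology K \<and> (\<forall>a\<in>K. \<forall>b\<in>K. \<rho> a b \<le> ratio * \<rho> \<xi> \<eta>)"
proof -
  obtain \<gamma> \<gamma>' where ray: "geodesic_ray E \<gamma>" "\<gamma> 0 = c" "\<gamma> \<in> \<xi>" and ray': "geodesic_ray E \<gamma>'" "\<gamma>' 0 = c" "\<gamma>' \<in> \<eta>"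
    using rays \<xi> \<eta> by meson
  obtain p where p: "gdist E (\<gamma> p) (\<gamma>' p) \<le> gap" "gap < gdist E (\<gamma> (Suc p)) (\<gamma>' (Suc p))"
    using geodesic_rays_split[OF \<xi> \<eta> \<open>\<xi> \<noteq> \<eta>\<close> ray ray'] by blast
  have "4 * \<delta> < real (gdist E (\<gamma> (Suc p)) (\<gamma>' (Suc p)))"
    using p(2) unfolding gap_def by linarith
  then have lower: "k1 * exp (- \<epsilon> * (real (Suc p) + gdist E c w + 4 * \<delta>)) \<le> \<rho> \<xi> \<eta>"
    by (rule visual_dist_ge_geodesic_rays[OF \<xi> \<eta> ray ray'])
  obtain L0 where initial: "lazy_path E L0" "\<forall>x\<in>set L0. p - gap \<le> gdist E x c"
    "hd L0 = \<gamma> (p - gap)" "last L0 = \<gamma>' (p - gap)" "length L0 \<le> 3 * gap + 3"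
    using lazy_path_between_geodesic_rays[OF ray(1,2) ray'(1,2) p(1)] by blast
  interpret visual_nested_chains E c D \<gamma> \<gamma>' "p - gap" L0 \<delta> w \<epsilon> k1 k2 \<rho>
    by unfold_locales (use ray ray' initial in auto)
  have "\<rho> a b \<le> ratio * \<rho> \<xi> \<eta>" if "a \<in> limit_set" "b \<in> limit_set" for a b
    using limit_set_diam[OF that] visual_bound_le_ratio[OF initial(5), of p]
      mult_left_mono[OF lower less_imp_le[OF ratio_pos]] by linarith
  then show ?thesis
    using limit_set_subset limit_set_compact limit_set_connected
      boundary_point_in_limit_set[OF ray(1,2) branch_geodesic_rays(1) \<xi> ray(3)]
      boundary_point_in_limit_set[OF ray'(1,2) branch_geodesic_rays(2) \<eta> ray'(3)]
    by blast
qed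

lemma linearly_connected_boundary: "linearly_connected (gromov_boundary E c) \<rho>"
  unfolding linearly_connected_def
proof (intro exI[of _ ratio] conjI ballI ratio_pos)
  fix \<xi> \<eta> assume \<xi>: "\<xi> \<in> gromov_boundary E c" and \<eta>: "\<eta> \<in> gromov_boundary E c"
  show "\<exists>K\<subseteq>gromov_boundary E c. \<xi> \<in> K \<and> \<eta> \<in> K \<and> compactin bdry.mtopology K \<and>
    connectedin bdry.mtopology K \<and> (\<forall>a\<in>K. \<forall>b\<in>K. \<rho> a b \<le> ratio * \<rho> \<xi> \<eta>)"
  proof (cases "\<xi> = \<eta>")
    case True
    then show ?thesis using \<xi> by (intro exI[of _ "{\<xi>}"]) simp
  next
    case False
    then show ?thesis by (rule distinct_boundary_points_in_small_continuum[OF \<xi> \<eta>])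
  qed
qed

end

theorem proposition2p2:
  fixes E :: "'v \<Rightarrow> 'v \<Rightarrow> bool" and c :: 'v and D :: real
  assumes hyp: "gromov_hyperbolic_graph E"
    and rays: "\<forall>\<xi>\<in>gromov_boundary E c. \<exists>\<gamma>. geodesic_ray E \<gamma> \<and> \<gamma> 0 = c \<and> \<gamma> \<in> \<xi>"
    and outward: "\<forall>v. \<exists>u. E v u \<and> gdist E u c = gdist E v c + 1"
    and Dpos: "D > 0"
    and cond3: "\<forall>r::nat. \<forall>z x y. gdist E z c = r \<and>
        gdist E x c = r + 1 \<and> gdist E x z \<le> 1 \<and>
        gdist E y c = r + 1 \<and> gdist E y z \<le> 1 \<longrightarrow>
        (\<exists>xs. is_path E xs \<and> hd xs = x \<and> last xs = y \<and>
           (\<forall>i<length xs. gdist E (xs ! i) c > r \<and> real (gdist E (xs ! i) x) \<le> D))"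
    and cond4: "\<forall>r::nat. \<forall>x y. gdist E x c = r \<and> gdist E y c = r \<and> E x y \<longrightarrow>
        (\<exists>xs. is_path E xs \<and> length xs \<ge> 3 \<and> hd xs = x \<and> last xs = y \<and>
           (\<forall>i. 0 < i \<and> i < length xs - 1 \<longrightarrow>
              gdist E (xs ! i) c > r \<and> real (gdist E (xs ! i) x) \<le> D))"
  shows "\<forall>w \<epsilon> \<rho>. visual_metric E c w \<epsilon> \<rho> \<longrightarrow> linearly_connected (gromov_boundary E c) \<rho>"
proof (intro allI impI)
  fix w \<epsilon> \<rho>
  assume "visual_metric E c w \<epsilon> \<rho>"
  then obtain k1 k2 where visual: "\<epsilon> > 0" "k1 > 0" "k2 > 0" "Metric_space (gromov_boundary E c) \<rho>"
    "\<forall>\<xi>\<in>gromov_boundary E c. \<forall>\<eta>\<in>gromov_boundary E c.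
       k1 * eexp_neg \<epsilon> (bprod E w \<xi> \<eta>) \<le> \<rho> \<xi> \<eta> \<and> \<rho> \<xi> \<eta> \<le> k2 * eexp_neg \<epsilon> (bprod E w \<xi> \<eta>)"
    unfolding visual_metric_def by blast
  obtain \<delta> where graph: "simple_graph E" "connected_graph E" "\<delta> \<ge> 0"
    "\<forall>w x y z. min (gprod E w x z) (gprod E w y z) - \<delta> \<le> gprod E w x y"
    using hyp unfolding gromov_hyperbolic_graph_def by blast
  interpret linear_connectivity_setting E c D \<delta> w \<epsilon> k1 k2 \<rho>
  proof unfold_locales
    show "\<And>w x y z. min (gprod E w x z) (gprod E w y z) - \<delta> \<le> gprod E w x y"
      using graph(4) by blast
    show "\<And>\<xi> \<eta>. \<xi> \<in> gromov_boundary E c \<Longrightarrow> \<eta> \<in> gromov_boundary E c \<Longrightarrow>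
        k1 * eexp_neg \<epsilon> (bprod E w \<xi> \<eta>) \<le> \<rho> \<xi> \<eta>"
      and "\<And>\<xi> \<eta>. \<xi> \<in> gromov_boundary E c \<Longrightarrow> \<eta> \<in> gromov_boundary E c \<Longrightarrow>
        \<rho> \<xi> \<eta> \<le> k2 * eexp_neg \<epsilon> (bprod E w \<xi> \<eta>)"
      using visual(5) by blast+
  qed (fact graph(1-3) visual(1-3) outward cond3 cond4 rays |
       use visual(4) in \<open>simp add: Metric_space_def\<close>)+
  show "linearly_connected (gromov_boundary E c) \<rho>"
    by (rule linearly_connected_boundary)
qed

end
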